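(* Let $p=2m\ge 4$ be even and let $U$ be the graph consisting of a cycle of length $p$ together with exactly one pendant vertex attached to one vertex of the cycle. Let $\Delta$ be the distance squared matrix of $U$. Then $(i_+(\Delta),i_-(\Delta),i_0(\Delta))=(m,m+1,0)$.
   Context: For a connected graph with vertices $1,\dots,n$, the distance squared matrix is the matrix with $(i,j)$ entry $d_{ij}^2$, where $d_{ij}$ is the graph distance between $i$ and $j$. For a real symmetric matrix $M$, $i_+(M)$, $i_-(M)$, $i_0(M)$ denote the number of positive eigenvalues, the number of negative eigenvalues (counted with multiplicity), and the multiplicity of the eigenvalue $0$. *)

theory Defs
  imports "Jordan_Normal_Form.Char_Poly"
begin

(* Graph on vertex set {0..<n} given by a symmetric adjacency relation E.
   Graph distance = length of a shortest walk (graph is assumed connected). *)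
definition graph_dist :: "(nat \<Rightarrow> nat \<Rightarrow> bool) \<Rightarrow> nat \<Rightarrow> nat \<Rightarrow> nat" where
  "graph_dist E i j = (LEAST k. (E ^^ k) i j)"

definition dist_sq_matrix :: "nat \<Rightarrow> (nat \<Rightarrow> nat \<Rightarrow> bool) \<Rightarrow> real mat" where
  "dist_sq_matrix n E = mat n n (\<lambda>(i, j). (real (graph_dist E i j))^2)"

(* U: cycle 0 - 1 - ... - (p-1) - 0, plus pendant vertex p attached to vertex 0 *)
definition unicycle_pendant_adj :: "nat \<Rightarrow> nat \<Rightarrow> nat \<Rightarrow> bool" where
  "unicycle_pendant_adj p i j =
     ((i < p \<and> j < p \<and> (j = (i + 1) mod p \<or> i = (j + 1) mod p))
      \<or> (i = 0 \<and> j = p) \<or> (i = p \<and> j = 0))"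

definition i_plus :: "real mat \<Rightarrow> nat" where
  "i_plus M = (\<Sum>a \<in> {a. a > 0 \<and> eigenvalue M a}. order a (char_poly M))"

definition i_minus :: "real mat \<Rightarrow> nat" where
  "i_minus M = (\<Sum>a \<in> {a. a < 0 \<and> eigenvalue M a}. order a (char_poly M))"

definition i_zero :: "real mat \<Rightarrow> nat" where
  "i_zero M = (if eigenvalue M 0 then order 0 (char_poly M) else 0)"

end

theory Submission
  imports Defs "Jordan_Normal_Form.Schur_Decomposition"
begin

text \<open>The distance squared matrix \<open>\<Delta>\<close> is real symmetric, hence orthogonally diagonalisable, and
  by Sylvester's argument its inertia is pinned down once we exhibit an \<open>m\<close>-dimensional space on
  which its quadratic form is positive definite and an \<open>(m + 1)\<close>-dimensional one on which it is
  negative definite; since \<open>m + (m + 1) = p + 1\<close>, no zero eigenvalue remains.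

  Both spaces consist of vectors \<open>L \<alpha>\<close>, corrected at vertex \<open>0\<close> and at the pendant vertex,
  where \<open>L\<close> is the second difference operator of the cycle. Summation by parts turns \<open>\<Delta> (L \<alpha>)\<close>
  into the second differences of the rows of \<open>\<Delta>\<close>; on the even cycle these are \<open>2\<close> everywhere
  except at the antipode of the row vertex, where they are \<open>2 - 4 m\<close>. So on antipodally
  antisymmetric \<open>\<alpha>\<close> the form is \<open>-4 m \<Sum>j. (\<alpha> (j + 1) - \<alpha> j)\<^sup>2\<close> plus a negative pendant term,
  and on antipodally symmetric \<open>\<alpha>\<close> it is \<open>4 m \<Sum>j. (\<alpha> (j + 1) - \<alpha> j)\<^sup>2\<close> plus a positive multiple
  of the square of the added constant.\<close>

section \<open>Orthogonal diagonalisation of real symmetric matrices\<close>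

lemma complex_eigenvalue_of_real_symmetric_is_real:
  fixes A :: "real mat" and a :: complex
  assumes A: "A \<in> carrier_mat n n" and sym: "transpose_mat A = A"
    and ev: "eigenvalue (map_mat complex_of_real A) a"
  shows "a \<in> \<real>"
proof -
  let ?Ac = "map_mat complex_of_real A"
  obtain v where "eigenvector ?Ac v a" using ev unfolding eigenvalue_def by blast
  hence v: "v \<in> carrier_vec n" and v0: "v \<noteq> 0\<^sub>v n" and eq: "?Ac *\<^sub>v v = a \<cdot>\<^sub>v v"
    unfolding eigenvector_def using A by auto
  have symA: "A $$ (i, j) = A $$ (j, i)" if "i < n" "j < n" for i j
    using sym A that by (metis carrier_matD index_transpose_mat(1))
  have row: "(\<Sum>j<n. of_real (A $$ (i, j)) * v $ j) = a * v $ i" if i: "i < n" for i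
  proof -
    have "(?Ac *\<^sub>v v) $ i = (a \<cdot>\<^sub>v v) $ i" using eq by simp
    thus ?thesis using i v A by (simp add: scalar_prod_def row_def atLeast0LessThan)
  qed
  define s where "s = (\<Sum>i<n. cnj (v $ i) * (\<Sum>j<n. of_real (A $$ (i, j)) * v $ j))"
  define N where "N = (\<Sum>i<n. (cmod (v $ i))\<^sup>2)"
  have s_eq: "s = a * of_real N"
  proof -
    have "s = a * (\<Sum>i<n. cnj (v $ i) * v $ i)"
      unfolding s_def by (simp add: row sum_distrib_left mult.left_commute)
    also have "(\<Sum>i<n. cnj (v $ i) * v $ i) = of_real N"
      unfolding N_def of_real_sum
      by (rule sum.cong) (auto simp: complex_norm_square mult.commute simp del: of_real_power)
    finally show ?thesis .
  qed
  \<comment> \<open>the Hermitian form of a real symmetric matrix takes real values\<close>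
  have "cnj s = (\<Sum>i<n. \<Sum>j<n. v $ i * (of_real (A $$ (i, j)) * cnj (v $ j)))"
    unfolding s_def by (simp add: sum_distrib_left)
  also have "\<dots> = (\<Sum>j<n. \<Sum>i<n. v $ i * (of_real (A $$ (i, j)) * cnj (v $ j)))"
    by (rule sum.swap)
  also have "\<dots> = s"
    unfolding s_def by (auto simp: sum_distrib_left symA intro!: sum.cong)
  finally have "cnj s = s" .
  moreover obtain i where "i < n" "v $ i \<noteq> 0" using v v0 by (metis eq_vecI carrier_vecD index_zero_vec)
  hence "N > 0" unfolding N_def
    by (intro sum_pos2[of _ i]) auto
  ultimately have "cnj a = a" using s_eq by (metis complex_cnj_complex_of_real complex_cnj_mult
        mult_cancel_right of_real_eq_0_iff less_irrefl)
  thus ?thesis by (simp add: Reals_cnj_iff)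
qed

lemma real_symmetric_has_eigenvalue:
  fixes A :: "real mat"
  assumes A: "A \<in> carrier_mat n n" and sym: "transpose_mat A = A" and n: "n > 0"
  obtains e where "eigenvalue A e"
proof -
  let ?Ac = "map_mat complex_of_real A"
  have Ac: "?Ac \<in> carrier_mat n n" using A by auto
  obtain as where fac: "char_poly ?Ac = (\<Prod>a\<leftarrow>as. [:- a, 1:])" and "length as = n"
    using char_poly_factorized[OF Ac] by blast
  with n obtain a as' where "as = a # as'" by (cases as) auto
  hence root: "poly (char_poly ?Ac) a = 0" unfolding fac by simp
  hence "a \<in> \<real>"
    using complex_eigenvalue_of_real_symmetric_is_real[OF A sym] eigenvalue_root_char_poly[OF Ac] by blast
  then obtain r where "a = of_real r" by (auto elim: Reals_cases)
  with root have "poly (char_poly A) r = 0"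
    by (simp add: of_real_hom.char_poly_hom[OF A] of_real_hom.poly_map_poly)
  thus ?thesis using that eigenvalue_root_char_poly[OF A] by blast
qed

definition orthonormal_mat :: "nat \<Rightarrow> 'a :: field mat \<Rightarrow> bool" where
  "orthonormal_mat n Q \<longleftrightarrow> Q \<in> carrier_mat n n \<and> transpose_mat Q * Q = 1\<^sub>m n"

lemma orthonormal_matD:
  assumes "orthonormal_mat n Q"
  shows "Q \<in> carrier_mat n n" "transpose_mat Q * Q = 1\<^sub>m n" "Q * transpose_mat Q = 1\<^sub>m n"
  using assms mat_mult_left_right_inverse[of "transpose_mat Q" n Q] unfolding orthonormal_mat_def by auto

lemma transpose_mult_congruence:
  fixes P Q A :: "'a :: comm_ring mat"
  assumes P: "P \<in> carrier_mat n n" and Q: "Q \<in> carrier_mat n n" and A: "A \<in> carrier_mat n n"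
  shows "transpose_mat (P * Q) * A * (P * Q) = transpose_mat Q * (transpose_mat P * A * P) * Q"
proof -
  have PT: "transpose_mat P \<in> carrier_mat n n" and QT: "transpose_mat Q \<in> carrier_mat n n"
    using P Q by auto
  have "transpose_mat (P * Q) * A * (P * Q) = transpose_mat Q * transpose_mat P * A * (P * Q)"
    using P Q by (simp add: transpose_mult)
  also have "\<dots> = transpose_mat Q * (transpose_mat P * A * P) * Q"
    using P Q A PT QT by (simp add: assoc_mult_mat[of _ n n _ n _ n] mult_carrier_mat[of _ n n _ n])
  finally show ?thesis .
qed

lemma symmetric_congruence:
  fixes P A :: "'a :: comm_ring mat"
  assumes P: "P \<in> carrier_mat n n" and A: "A \<in> carrier_mat n n" and sym: "transpose_mat A = A"
  shows "transpose_mat (transpose_mat P * A * P) = transpose_mat P * A * P"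
proof -
  have PT: "transpose_mat P \<in> carrier_mat n n" using P by auto
  have "transpose_mat (transpose_mat P * A * P) = transpose_mat P * transpose_mat (transpose_mat P * A)"
    using transpose_mult[OF mult_carrier_mat[OF PT A] P] .
  also have "transpose_mat (transpose_mat P * A) = A * P"
    using transpose_mult[OF PT A] sym by simp
  finally show ?thesis using P A PT by (simp add: assoc_mult_mat[of _ n n _ n _ n])
qed

lemma orthonormal_mat_mult:
  assumes P: "orthonormal_mat n P" and Q: "orthonormal_mat n Q"
  shows "orthonormal_mat n (P * Q)"
proof -
  note P' = orthonormal_matD[OF P] and Q' = orthonormal_matD[OF Q]
  have "transpose_mat (P * Q) * (P * Q) = transpose_mat Q * (transpose_mat P * P) * Q"
    using transpose_mult_congruence[OF P'(1) Q'(1), of "1\<^sub>m n"] P'(1) Q'(1) by simp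
  thus ?thesis using P'(1) Q' P'(2) unfolding orthonormal_mat_def by auto
qed

lemma orthonormal_mat_block:
  assumes Q: "orthonormal_mat n Q"
  shows "orthonormal_mat (Suc n) (four_block_mat (1\<^sub>m 1) (0\<^sub>m 1 n) (0\<^sub>m n 1) Q)"
proof -
  note Q' = orthonormal_matD[OF Q]
  have QT: "transpose_mat Q \<in> carrier_mat n n" using Q'(1) by simp
  have "four_block_mat (1\<^sub>m 1) (0\<^sub>m 1 n) (0\<^sub>m n 1) Q \<in> carrier_mat (1 + n) (1 + n)"
    using Q'(1) by (intro four_block_carrier_mat) auto
  thus ?thesis
    unfolding orthonormal_mat_def
    using Q'(1,2) four_block_one_mat[of 1 n]
    by (simp add: transpose_four_block_mat[OF one_carrier_mat zero_carrier_mat zero_carrier_mat Q'(1)]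
        mult_four_block_mat[OF one_carrier_mat zero_carrier_mat zero_carrier_mat QT
          one_carrier_mat zero_carrier_mat zero_carrier_mat Q'(1)])
qed

lemma orthonormal_mat_congruence_similar:
  assumes Q: "orthonormal_mat n Q" and A: "A \<in> carrier_mat n n"
  shows "similar_mat_wit A (transpose_mat Q * A * Q) Q (transpose_mat Q)"
proof -
  note Q' = orthonormal_matD[OF Q]
  have QT: "transpose_mat Q \<in> carrier_mat n n" using Q'(1) by simp
  have "Q * (transpose_mat Q * A * Q) * transpose_mat Q = (Q * transpose_mat Q) * A * (Q * transpose_mat Q)"
    using Q'(1) QT A by (simp add: assoc_mult_mat[of _ n n _ n _ n])
  thus ?thesis using Q' QT A by (intro similar_mat_witI[of _ _ n]) auto
qed

lemma orthonormal_mat_with_first_col: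
  fixes v :: "real vec"
  assumes v: "v \<in> carrier_vec n" and v0: "v \<noteq> 0\<^sub>v n"
  obtains W c where "orthonormal_mat n W" and "col W 0 = c \<cdot>\<^sub>v v"
proof -
  interpret cof_vec_space n "TYPE(real)" .
  define b where "b = basis_completion v"
  define ws where "ws = gram_schmidt n b"
  from basis_completion[OF v v0, folded b_def]
  have b: "distinct b" "\<not> lin_dep (set b)" "set b \<subseteq> carrier_vec n" "hd b = v" "length b = n"
    by auto
  then obtain vs where bv: "b = v # vs" by (cases b) (use v0 v in auto)
  from gram_schmidt_result[OF b(3,1,2) refl, folded ws_def]
  have ws: "set ws \<subseteq> carrier_vec n" "corthogonal ws" "length ws = n" by (auto simp: b(5))
  from gram_schmidt_hd[OF v, of vs, folded bv] have "hd ws = v" unfolding ws_def .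
  moreover have "n > 0" using v v0 by (cases n) auto
  ultimately have ws0: "ws ! 0 = v" using ws(3) by (cases ws) auto
  have ws_carrier: "ws ! i \<in> carrier_vec n" if "i < n" for i using ws that by auto
  have ws_orth: "(ws ! i \<bullet> ws ! j = 0) = (i \<noteq> j)" if "i < n" "j < n" for i j
    using corthogonalD[OF ws(2)] ws(3) that by simp
  have ws_pos: "ws ! i \<bullet> ws ! i > 0" if "i < n" for i
    using ws_orth[OF that that] conjugate_square_ge_0_vec[of "ws ! i"] by simp
  define c where "c i = 1 / sqrt (ws ! i \<bullet> ws ! i)" for i
  define W where "W = mat n n (\<lambda>(i, j). c j * ws ! j $ i)"
  have colW: "col W j = c j \<cdot>\<^sub>v ws ! j" if "j < n" for j
    unfolding W_def using that ws_carrier[OF that] by (intro eq_vecI) auto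
  have W: "W \<in> carrier_mat n n" unfolding W_def by simp
  have "(transpose_mat W * W) $$ (i, j) = 1\<^sub>m n $$ (i, j)" if ij: "i < n" "j < n" for i j
  proof -
    have "(transpose_mat W * W) $$ (i, j) = c i * c j * (ws ! i \<bullet> ws ! j)"
      using W ij colW ws_carrier[OF ij(1)] ws_carrier[OF ij(2)] by simp
    also have "\<dots> = 1\<^sub>m n $$ (i, j)"
      using ij ws_orth ws_pos[OF ij(1)] unfolding c_def
      by (cases "i = j") (auto simp: real_sqrt_mult[symmetric])
    finally show ?thesis .
  qed
  hence "transpose_mat W * W = 1\<^sub>m n" using W by (intro eq_matI) auto
  hence "orthonormal_mat n W" using W unfolding orthonormal_mat_def by simp
  moreover have "col W 0 = c 0 \<cdot>\<^sub>v v" using colW ws0 \<open>n > 0\<close> by simp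
  ultimately show ?thesis using that by blast
qed

lemma symmetric_congruence_eigenvector_block:
  fixes A W :: "real mat"
  assumes A: "A \<in> carrier_mat (Suc n) (Suc n)" and sym: "transpose_mat A = A"
    and W: "orthonormal_mat (Suc n) W" and ev: "A *\<^sub>v col W 0 = e \<cdot>\<^sub>v col W 0"
  obtains B where "B \<in> carrier_mat n n" "transpose_mat B = B"
    "transpose_mat W * A * W = four_block_mat (mat 1 1 (\<lambda>_. e)) (0\<^sub>m 1 n) (0\<^sub>m n 1) B"
proof -
  note W' = orthonormal_matD[OF W]
  have WT: "transpose_mat W \<in> carrier_mat (Suc n) (Suc n)" using W'(1) by simp
  define A' where "A' = transpose_mat W * A * W"
  have A': "A' \<in> carrier_mat (Suc n) (Suc n)" unfolding A'_def using W'(1) A by simp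
  have A'_sym: "transpose_mat A' = A'"
    unfolding A'_def by (rule symmetric_congruence[OF W'(1) A sym])
  have AW: "A' = transpose_mat W * (A * W)"
    unfolding A'_def using W'(1) A by (simp add: assoc_mult_mat[of _ "Suc n" "Suc n"])
  have AW0: "col (A * W) 0 = e \<cdot>\<^sub>v col W 0"
    using col_mult2[OF A W'(1), of 0] ev by simp
  have col0: "A' $$ (i, 0) = (if i = 0 then e else 0)" if i: "i < Suc n" for i
  proof -
    have "A' $$ (i, 0) = row (transpose_mat W) i \<bullet> col (A * W) 0"
      unfolding AW using W'(1) A i by (intro index_mult_mat(1)) auto
    also have "\<dots> = e * (col W i \<bullet> col W 0)"
      unfolding AW0 using W'(1) i by simp
    also have "\<dots> = e * (transpose_mat W * W) $$ (i, 0)"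
      using W'(1) i by simp
    finally show ?thesis using W'(2) i by simp
  qed
  have row0: "A' $$ (0, j) = (if j = 0 then e else 0)" if "j < Suc n" for j
    using col0[OF that] A'_sym A' that by (metis carrier_matD index_transpose_mat(1) zero_less_Suc)
  define B where "B = mat n n (\<lambda>(i, j). A' $$ (Suc i, Suc j))"
  have "transpose_mat B = B"
    unfolding B_def using A'_sym A'
    by (intro eq_matI) (auto, metis Suc_less_eq carrier_matD index_transpose_mat(1))
  moreover have "A' = four_block_mat (mat 1 1 (\<lambda>_. e)) (0\<^sub>m 1 n) (0\<^sub>m n 1) B"
    by (rule eq_matI) (use A' col0 row0 in \<open>auto simp: B_def\<close>)
  ultimately show ?thesis using that[of B] unfolding A'_def B_def by auto
qed

lemma four_block_congruence:
  fixes E B Q :: "'a :: comm_ring_1 mat"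
  assumes E: "E \<in> carrier_mat 1 1" and B: "B \<in> carrier_mat n n" and Q: "Q \<in> carrier_mat n n"
  defines "Q' \<equiv> four_block_mat (1\<^sub>m 1) (0\<^sub>m 1 n) (0\<^sub>m n 1) Q"
  shows "transpose_mat Q' * four_block_mat E (0\<^sub>m 1 n) (0\<^sub>m n 1) B * Q'
    = four_block_mat E (0\<^sub>m 1 n) (0\<^sub>m n 1) (transpose_mat Q * B * Q)"
proof -
  have QT: "transpose_mat Q \<in> carrier_mat n n" using Q by simp
  have Q'T: "transpose_mat Q' = four_block_mat (1\<^sub>m 1) (0\<^sub>m 1 n) (0\<^sub>m n 1) (transpose_mat Q)"
    unfolding Q'_def using Q by (simp add: transpose_four_block_mat[of _ 1 1 _ n _ n])
  have "transpose_mat Q' * four_block_mat E (0\<^sub>m 1 n) (0\<^sub>m n 1) B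
      = four_block_mat E (0\<^sub>m 1 n) (0\<^sub>m n 1) (transpose_mat Q * B)"
    unfolding Q'T mult_four_block_mat[OF one_carrier_mat zero_carrier_mat zero_carrier_mat QT E
        zero_carrier_mat zero_carrier_mat B]
    using QT E B by (simp add: left_mult_one_mat right_add_zero_mat)
  also have "\<dots> * Q' = four_block_mat E (0\<^sub>m 1 n) (0\<^sub>m n 1) (transpose_mat Q * B * Q)"
    unfolding Q'_def mult_four_block_mat[OF E zero_carrier_mat zero_carrier_mat mult_carrier_mat[OF QT B]
        one_carrier_mat zero_carrier_mat zero_carrier_mat Q]
    using Q QT E B by simp
  finally show ?thesis .
qed

theorem real_symmetric_orthogonally_diagonalizable:
  fixes A :: "real mat"
  assumes "A \<in> carrier_mat n n" and "transpose_mat A = A"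
  obtains Q where "orthonormal_mat n Q" and "diagonal_mat (transpose_mat Q * A * Q)"
  using assms
proof (induction n arbitrary: A thesis)
  case 0
  show ?case
    by (rule "0.prems"(1)[of "1\<^sub>m 0"]) (use "0.prems" in \<open>auto simp: orthonormal_mat_def diagonal_mat_def\<close>)
next
  case (Suc n)
  note A = Suc.prems(2) and sym = Suc.prems(3)
  obtain e v where "eigenvector A v e"
    using real_symmetric_has_eigenvalue[OF A sym] unfolding eigenvalue_def by blast
  hence v: "v \<in> carrier_vec (Suc n)" "v \<noteq> 0\<^sub>v (Suc n)" and Av: "A *\<^sub>v v = e \<cdot>\<^sub>v v"
    unfolding eigenvector_def using A by auto
  obtain W c where W: "orthonormal_mat (Suc n) W" and W0: "col W 0 = c \<cdot>\<^sub>v v"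
    using orthonormal_mat_with_first_col[OF v] .
  have "A *\<^sub>v col W 0 = e \<cdot>\<^sub>v col W 0"
    unfolding W0 using A v Av by (simp add: mult_mat_vec smult_smult_assoc mult.commute)
  then obtain B where B: "B \<in> carrier_mat n n" "transpose_mat B = B"
    and WAW: "transpose_mat W * A * W = four_block_mat (mat 1 1 (\<lambda>_. e)) (0\<^sub>m 1 n) (0\<^sub>m n 1) B"
    using symmetric_congruence_eigenvector_block[OF A sym W] by blast
  obtain Q' where Q': "orthonormal_mat n Q'" and diag': "diagonal_mat (transpose_mat Q' * B * Q')"
    using Suc.IH[OF _ B] by blast
  define Q'' where "Q'' = four_block_mat (1\<^sub>m 1) (0\<^sub>m 1 n) (0\<^sub>m n 1) Q'"
  have Q'': "orthonormal_mat (Suc n) Q''" unfolding Q''_def by (rule orthonormal_mat_block[OF Q'])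
  note carr = orthonormal_matD(1)[OF W] orthonormal_matD(1)[OF Q'']
  have "transpose_mat (W * Q'') * A * (W * Q'') = transpose_mat Q'' * (transpose_mat W * A * W) * Q''"
    by (rule transpose_mult_congruence[OF carr A])
  also have "\<dots> = four_block_mat (mat 1 1 (\<lambda>_. e)) (0\<^sub>m 1 n) (0\<^sub>m n 1) (transpose_mat Q' * B * Q')"
    unfolding WAW Q''_def
    by (rule four_block_congruence) (use B orthonormal_matD(1)[OF Q'] in auto)
  finally have "diagonal_mat (transpose_mat (W * Q'') * A * (W * Q''))"
    using diag' B orthonormal_matD(1)[OF Q'] unfolding diagonal_mat_def by auto
  thus ?case using Suc.prems(1) orthonormal_mat_mult[OF W Q''] by blast
qed

lemma order_prod_linear_factors:
  "Polynomial.order a (\<Prod>x\<leftarrow>xs. [:- x, 1:]) = count_list xs (a :: 'a :: idom)"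
proof (induction xs)
  case (Cons x xs)
  have "(\<Prod>x\<leftarrow>xs. [:- x, 1:]) \<noteq> 0" by (auto simp: prod_list_zero_iff)
  hence "[:- x, 1:] * (\<Prod>y\<leftarrow>xs. [:- y, 1:]) \<noteq> 0"
    by (metis mult_eq_0_iff pCons_eq_0_iff one_neq_zero)
  hence "Polynomial.order a ([:- x, 1:] * (\<Prod>y\<leftarrow>xs. [:- y, 1:]))
      = Polynomial.order a [:- x, 1:] + Polynomial.order a (\<Prod>y\<leftarrow>xs. [:- y, 1:])"
    by (rule order_mult)
  thus ?case using Cons by (simp add: order_linear')
qed (simp add: order_0I)

lemma sum_count_list_filter:
  assumes "finite T" and "{a \<in> set xs. P a} \<subseteq> T" and "T \<subseteq> {a. P a}"
  shows "(\<Sum>a\<in>T. count_list xs a) = length (filter P xs)"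
  using assms(2)
proof (induction xs)
  case (Cons x xs)
  have "(\<Sum>a\<in>T. count_list (x # xs) a) = (\<Sum>a\<in>T. count_list xs a + (if x = a then 1 else 0))"
    by (rule sum.cong) auto
  also have "\<dots> = (\<Sum>a\<in>T. count_list xs a) + (\<Sum>a\<in>T. if x = a then 1 else 0)"
    by (rule sum.distrib)
  also have "(\<Sum>a\<in>T. if x = a then 1 else 0) = (if P x then 1 else (0::nat))"
    using Cons.prems assms(1,3) by (auto simp: sum.delta)
  finally show ?case using Cons by auto
qed simp

lemma sum_order_char_poly_orthonormal_diag:
  fixes A Q :: "real mat"
  assumes A: "A \<in> carrier_mat n n" and Q: "orthonormal_mat n Q"
    and diag: "diagonal_mat (transpose_mat Q * A * Q)"
  shows "(\<Sum>a \<in> {a. P a \<and> eigenvalue A a}. Polynomial.order a (char_poly A))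
    = card {i. i < n \<and> P ((transpose_mat Q * A * Q) $$ (i, i))}"
proof -
  define D where "D = transpose_mat Q * A * Q"
  define ds where "ds = map (\<lambda>i. D $$ (i, i)) [0..<n]"
  have D: "D \<in> carrier_mat n n" unfolding D_def using orthonormal_matD(1)[OF Q] A by simp
  have "similar_mat A D"
    unfolding similar_mat_def D_def using orthonormal_mat_congruence_similar[OF Q A] by blast
  hence "char_poly A = char_poly D" by (rule char_poly_similar)
  also have "\<dots> = (\<Prod>x\<leftarrow>ds. [:- x, 1:])"
    using char_poly_upper_triangular[OF D] diag D
    unfolding ds_def D_def diag_mat_def diagonal_mat_def upper_triangular_def by auto
  finally have cp: "char_poly A = (\<Prod>x\<leftarrow>ds. [:- x, 1:])" .
  have ev: "eigenvalue A a \<longleftrightarrow> a \<in> set ds" for a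
    unfolding eigenvalue_root_char_poly[OF A] cp by (induction ds) auto
  have "(\<Sum>a \<in> {a. P a \<and> eigenvalue A a}. Polynomial.order a (char_poly A)) = length (filter P ds)"
    unfolding cp order_prod_linear_factors ev by (rule sum_count_list_filter) auto
  also have "\<dots> = card {i. i < n \<and> P (D $$ (i, i))}"
    unfolding length_filter_conv_card ds_def by (intro arg_cong[where f = card]) auto
  finally show ?thesis unfolding D_def .
qed

lemma exists_nonzero_vec_vanishing_on_rows:
  fixes R :: "'a :: idom mat"
  assumes R: "R \<in> carrier_mat n k" and S: "S \<subseteq> {..<n}" and card: "card S < k"
  obtains \<gamma> where "\<gamma> \<in> carrier_vec k" "\<gamma> \<noteq> 0\<^sub>v k" "\<And>t. t \<in> S \<Longrightarrow> (R *\<^sub>v \<gamma>) $ t = 0"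
proof -
  define ts where "ts = sorted_list_of_set S"
  have "finite S" using S finite_subset by blast
  hence ts: "length ts = card S" "set ts = S" unfolding ts_def by auto
  \<comment> \<open>the rows of \<open>R\<close> indexed by \<open>S\<close>, padded by zero rows to a singular square matrix\<close>
  define M where "M = mat\<^sub>r k k (\<lambda>i. if i = k - 1 then 0\<^sub>v k
    else vec k (\<lambda>j. if i < card S then R $$ (ts ! i, j) else 0))"
  have M: "M \<in> carrier_mat k k" unfolding M_def by simp
  have "det M = 0" unfolding M_def by (rule det_row_0) (use card in auto)
  then obtain \<gamma> where \<gamma>: "\<gamma> \<in> carrier_vec k" "\<gamma> \<noteq> 0\<^sub>v k" and M\<gamma>: "M *\<^sub>v \<gamma> = 0\<^sub>v k"
    using det_0_iff_vec_prod_zero[OF M] by blast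
  have "(R *\<^sub>v \<gamma>) $ t = 0" if t: "t \<in> S" for t
  proof -
    obtain i where i: "i < card S" and ti: "t = ts ! i" using t ts by (metis in_set_conv_nth)
    have "row M i = row R t" unfolding M_def ti using i card R S t ti by (intro eq_vecI) auto
    moreover have "(M *\<^sub>v \<gamma>) $ i = row M i \<bullet> \<gamma>" using i card M by simp
    ultimately show ?thesis using M\<gamma> i card R S t by auto
  qed
  thus ?thesis using that \<gamma> by blast
qed

lemma quadratic_form_orthonormal_diag:
  fixes A Q :: "real mat"
  assumes A: "A \<in> carrier_mat n n" and Q: "orthonormal_mat n Q"
    and diag: "diagonal_mat (transpose_mat Q * A * Q)" and x: "x \<in> carrier_vec n"
  shows "x \<bullet> (A *\<^sub>v x) = (\<Sum>i<n. (transpose_mat Q * A * Q) $$ (i, i) * ((transpose_mat Q *\<^sub>v x) $ i)\<^sup>2)"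
proof -
  define D where "D = transpose_mat Q * A * Q"
  define y where "y = transpose_mat Q *\<^sub>v x"
  note sim = similar_mat_witD2[OF A orthonormal_mat_congruence_similar[OF Q A], folded D_def]
  have D: "D \<in> carrier_mat n n" and Q': "Q \<in> carrier_mat n n" using sim by auto
  have y: "y \<in> carrier_vec n" unfolding y_def using x Q' by simp
  have Dy: "(D *\<^sub>v y) $ i = D $$ (i, i) * y $ i" if i: "i < n" for i
  proof -
    have "(D *\<^sub>v y) $ i = (\<Sum>j<n. D $$ (i, j) * y $ j)"
      using D y i by (simp add: scalar_prod_def row_def atLeast0LessThan)
    also have "\<dots> = (\<Sum>j<n. if j = i then D $$ (i, i) * y $ i else 0)"
      by (rule sum.cong) (use diag D i in \<open>auto simp: diagonal_mat_def simp flip: D_def\<close>)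
    finally show ?thesis using i by simp
  qed
  have "x \<bullet> (A *\<^sub>v x) = x \<bullet> (Q *\<^sub>v (D *\<^sub>v y))"
    unfolding y_def using D Q' x by (subst sim(3)) (simp add: assoc_mult_mat_vec[of _ n n _ n])
  also have "\<dots> = y \<bullet> (D *\<^sub>v y)"
    using transpose_vec_mult_scalar[of Q n n "D *\<^sub>v y" x] D Q' x y by (simp add: y_def)
  also have "\<dots> = (\<Sum>i<n. y $ i * (D *\<^sub>v y) $ i)"
    using D by (simp add: scalar_prod_def atLeast0LessThan del: index_mult_mat_vec)
  also have "\<dots> = (\<Sum>i<n. D $$ (i, i) * (y $ i)\<^sup>2)"
    by (rule sum.cong) (simp_all add: Dy power2_eq_square)
  finally show ?thesis unfolding D_def y_def .
qed

text \<open>Sylvester's argument: a subspace on which \<open>\<sigma>\<close> times the form is definite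
  meets the span of the eigenvectors with \<open>\<sigma> * \<lambda> \<le> 0\<close> only in \<open>0\<close>.\<close>

lemma definite_subspace_dim_le:
  fixes A Q N :: "real mat" and \<sigma> :: real
  assumes A: "A \<in> carrier_mat n n" and Q: "orthonormal_mat n Q"
    and diag: "diagonal_mat (transpose_mat Q * A * Q)" and N: "N \<in> carrier_mat n k"
    and definite: "\<And>\<gamma>. \<gamma> \<in> carrier_vec k \<Longrightarrow> \<gamma> \<noteq> 0\<^sub>v k \<Longrightarrow> \<sigma> * ((N *\<^sub>v \<gamma>) \<bullet> (A *\<^sub>v (N *\<^sub>v \<gamma>))) > 0"
  shows "k \<le> card {i. i < n \<and> \<sigma> * (transpose_mat Q * A * Q) $$ (i, i) > 0}"
proof (rule ccontr)
  define D where "D = transpose_mat Q * A * Q"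
  define S where "S = {i. i < n \<and> \<sigma> * D $$ (i, i) > 0}"
  have QT: "transpose_mat Q \<in> carrier_mat n n" using orthonormal_matD(1)[OF Q] by simp
  assume "\<not> ?thesis"
  hence "card S < k" unfolding S_def D_def by simp
  moreover have "S \<subseteq> {..<n}" unfolding S_def by auto
  ultimately obtain \<gamma> where \<gamma>: "\<gamma> \<in> carrier_vec k" "\<gamma> \<noteq> 0\<^sub>v k"
    and vanish: "\<And>t. t \<in> S \<Longrightarrow> (transpose_mat Q * N *\<^sub>v \<gamma>) $ t = 0"
    using exists_nonzero_vec_vanishing_on_rows[OF mult_carrier_mat[OF QT N]] by metis
  define x where "x = N *\<^sub>v \<gamma>"
  have x: "x \<in> carrier_vec n" unfolding x_def using N \<gamma> by simp
  have y: "transpose_mat Q *\<^sub>v x = transpose_mat Q * N *\<^sub>v \<gamma>"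
    unfolding x_def using assoc_mult_mat_vec[OF QT N \<gamma>(1)] by simp
  have "\<sigma> * (x \<bullet> (A *\<^sub>v x)) = (\<Sum>i<n. \<sigma> * D $$ (i, i) * ((transpose_mat Q *\<^sub>v x) $ i)\<^sup>2)"
    unfolding quadratic_form_orthonormal_diag[OF A Q diag x] D_def
    by (simp add: sum_distrib_left mult.assoc)
  also have "\<dots> \<le> 0"
  proof (rule sum_nonpos)
    fix i assume "i \<in> {..<n}"
    show "\<sigma> * D $$ (i, i) * ((transpose_mat Q *\<^sub>v x) $ i)\<^sup>2 \<le> 0"
    proof (cases "\<sigma> * D $$ (i, i) > 0")
      case True
      with \<open>i \<in> {..<n}\<close> have "i \<in> S" unfolding S_def by simp
      thus ?thesis using vanish y by simp
    qed (simp add: mult_nonpos_nonneg)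
  qed
  finally show False using definite[OF \<gamma>] unfolding x_def by simp
qed

lemma card_sign_partition:
  fixes d :: "nat \<Rightarrow> 'a :: {linorder, zero}"
  shows "card {i. i < n \<and> d i > 0} + card {i. i < n \<and> d i < 0} + card {i. i < n \<and> d i = 0} = n"
proof -
  have "{..<n} = ({i. i < n \<and> d i > 0} \<union> {i. i < n \<and> d i < 0}) \<union> {i. i < n \<and> d i = 0}"
    by auto
  hence "n = card (({i. i < n \<and> d i > 0} \<union> {i. i < n \<and> d i < 0}) \<union> {i. i < n \<and> d i = 0})"
    by (metis card_lessThan)
  also have "\<dots> = card ({i. i < n \<and> d i > 0} \<union> {i. i < n \<and> d i < 0}) + card {i. i < n \<and> d i = 0}"
    by (rule card_Un_disjoint) auto
  also have "card ({i. i < n \<and> d i > 0} \<union> {i. i < n \<and> d i < 0})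
      = card {i. i < n \<and> d i > 0} + card {i. i < n \<and> d i < 0}"
    by (rule card_Un_disjoint) auto
  finally show ?thesis by simp
qed

theorem inertia_from_definite_subspaces:
  fixes A P N :: "real mat"
  assumes A: "A \<in> carrier_mat n n" and sym: "transpose_mat A = A"
    and P: "P \<in> carrier_mat n k"
    and pos: "\<And>\<gamma>. \<gamma> \<in> carrier_vec k \<Longrightarrow> \<gamma> \<noteq> 0\<^sub>v k \<Longrightarrow> (P *\<^sub>v \<gamma>) \<bullet> (A *\<^sub>v (P *\<^sub>v \<gamma>)) > 0"
    and N: "N \<in> carrier_mat n l"
    and neg: "\<And>\<gamma>. \<gamma> \<in> carrier_vec l \<Longrightarrow> \<gamma> \<noteq> 0\<^sub>v l \<Longrightarrow> (N *\<^sub>v \<gamma>) \<bullet> (A *\<^sub>v (N *\<^sub>v \<gamma>)) < 0"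
    and n: "k + l = n"
  shows "(i_plus A, i_minus A, i_zero A) = (k, l, 0)"
proof -
  obtain Q where Q: "orthonormal_mat n Q" and diag: "diagonal_mat (transpose_mat Q * A * Q)"
    using real_symmetric_orthogonally_diagonalizable[OF A sym] .
  define d where "d i = (transpose_mat Q * A * Q) $$ (i, i)" for i
  note count = sum_order_char_poly_orthonormal_diag[OF A Q diag, folded d_def]
  have "k \<le> card {i. i < n \<and> 1 * d i > 0}"
    unfolding d_def by (rule definite_subspace_dim_le[OF A Q diag P]) (use pos in simp)
  hence k: "k \<le> card {i. i < n \<and> d i > 0}" by simp
  have "l \<le> card {i. i < n \<and> - 1 * d i > 0}"
    unfolding d_def by (rule definite_subspace_dim_le[OF A Q diag N]) (use neg in simp)
  hence l: "l \<le> card {i. i < n \<and> d i < 0}" by simp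
  have "card {i. i < n \<and> d i > 0} = k" "card {i. i < n \<and> d i < 0} = l"
    "card {i. i < n \<and> d i = 0} = 0"
    using card_sign_partition[of n d] k l n by linarith+
  moreover have "{a. a = 0 \<and> eigenvalue A a} = (if eigenvalue A 0 then {0} else {})" by auto
  ultimately show ?thesis
    unfolding i_plus_def i_minus_def i_zero_def using count[of "\<lambda>a. 0 < a"] count[of "\<lambda>a. a < 0"]
      count[of "\<lambda>a. a = 0"] by (auto split: if_splits)
qed

section \<open>Distances in a cycle with a pendant vertex\<close>

definition cyc_succ :: "nat \<Rightarrow> nat \<Rightarrow> nat" where
  "cyc_succ p j = (if Suc j = p then 0 else Suc j)"

definition cyc_pred :: "nat \<Rightarrow> nat \<Rightarrow> nat" where
  "cyc_pred p j = (if j = 0 then p - 1 else j - 1)"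

lemma cyc_succ_less: "j < p \<Longrightarrow> cyc_succ p j < p"
  unfolding cyc_succ_def by auto

lemma cyc_pred_less: "j < p \<Longrightarrow> cyc_pred p j < p"
  unfolding cyc_pred_def by auto

lemma cyc_pred_succ [simp]: "j < p \<Longrightarrow> cyc_pred p (cyc_succ p j) = j"
  unfolding cyc_pred_def cyc_succ_def by auto

lemma cyc_succ_pred [simp]: "j < p \<Longrightarrow> cyc_succ p (cyc_pred p j) = j"
  unfolding cyc_pred_def cyc_succ_def by auto

lemma unicycle_pendant_adj_iff:
  "unicycle_pendant_adj p i j \<longleftrightarrow>
    (i < p \<and> j < p \<and> (j = cyc_succ p i \<or> i = cyc_succ p j)) \<or> (i = 0 \<and> j = p) \<or> (i = p \<and> j = 0)"
proof -
  have "(k + 1) mod p = cyc_succ p k" if "k < p" for k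
    using that unfolding cyc_succ_def by (auto simp: mod_if)
  thus ?thesis unfolding unicycle_pendant_adj_def by auto
qed

definition cycle_dist :: "nat \<Rightarrow> nat \<Rightarrow> nat \<Rightarrow> nat" where
  "cycle_dist p i j = min (if i \<le> j then j - i else i - j) (p - (if i \<le> j then j - i else i - j))"

definition unicycle_pendant_dist :: "nat \<Rightarrow> nat \<Rightarrow> nat \<Rightarrow> nat" where
  "unicycle_pendant_dist p i j =
    (if i < p \<and> j < p then cycle_dist p i j
     else if i = p \<and> j = p then 0
     else if i = p then Suc (cycle_dist p 0 j)
     else Suc (cycle_dist p i 0))"

lemma cycle_dist_commute: "cycle_dist p i j = cycle_dist p j i"
  unfolding cycle_dist_def by auto

lemma unicycle_pendant_dist_commute:
  "i \<le> p \<Longrightarrow> j \<le> p \<Longrightarrow> unicycle_pendant_dist p i j = unicycle_pendant_dist p j i"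
  unfolding unicycle_pendant_dist_def by (auto simp: cycle_dist_commute)

lemma cycle_dist_adj_le:
  assumes "i < p" "j < p" "y < p" "j = cyc_succ p y \<or> y = cyc_succ p j"
  shows "cycle_dist p i j \<le> Suc (cycle_dist p i y)"
  using assms unfolding cycle_dist_def cyc_succ_def by (auto split: if_splits)

lemma unicycle_pendant_dist_adj_le:
  assumes adj: "unicycle_pendant_adj p y j" and i: "i \<le> p"
  shows "unicycle_pendant_dist p i j \<le> Suc (unicycle_pendant_dist p i y)"
proof (cases "i < p")
  case True
  with adj show ?thesis
    unfolding unicycle_pendant_adj_iff unicycle_pendant_dist_def
    using cycle_dist_adj_le[of i p j y] by (auto simp: cycle_dist_def)
next
  case False
  with i adj show ?thesis
    unfolding unicycle_pendant_adj_iff unicycle_pendant_dist_def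
    using cycle_dist_adj_le[of 0 p j y] by (auto simp: cycle_dist_def)
qed

lemma unicycle_pendant_dist_le_walk:
  assumes "(unicycle_pendant_adj p ^^ k) i j" and "i \<le> p"
  shows "unicycle_pendant_dist p i j \<le> k"
  using assms(1)
proof (induction k arbitrary: j)
  case 0
  thus ?case using assms(2) by (simp add: unicycle_pendant_dist_def cycle_dist_def)
next
  case (Suc k)
  then obtain y where "(unicycle_pendant_adj p ^^ k) i y" and "unicycle_pendant_adj p y j" by auto
  with Suc.IH show ?case using unicycle_pendant_dist_adj_le[OF _ assms(2)] by fastforce
qed

lemma relpowp_sym:
  assumes sym: "\<And>x y. R x y \<Longrightarrow> R y x" and "(R ^^ k) x y"
  shows "(R ^^ k) y x"
  using assms(2)
proof (induction k arbitrary: y)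
  case (Suc k)
  then obtain z where "(R ^^ k) x z" and "R z y" by auto
  with Suc.IH sym show ?case by (blast intro: relpowp_Suc_I2)
qed simp

lemma unicycle_pendant_walk_forward:
  assumes "i < p"
  shows "(unicycle_pendant_adj p ^^ k) i ((i + k) mod p)"
proof (induction k)
  case (Suc k)
  have "unicycle_pendant_adj p ((i + k) mod p) ((i + Suc k) mod p)"
    using assms unfolding unicycle_pendant_adj_def by (simp add: mod_Suc_eq)
  with Suc show ?case by (rule relpowp_Suc_I)
qed (use assms in simp)

lemma unicycle_pendant_walk_cycle_dist:
  assumes i: "i < p" and j: "j < p"
  shows "(unicycle_pendant_adj p ^^ cycle_dist p i j) i j"
proof -
  have sym: "unicycle_pendant_adj p x y \<Longrightarrow> unicycle_pendant_adj p y x" for x y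
    unfolding unicycle_pendant_adj_def by auto
  have "(unicycle_pendant_adj p ^^ cycle_dist p i j) i j" if ij: "i \<le> j" "i < p" "j < p" for i j
  proof (cases "j - i \<le> p - (j - i)")
    case True
    with ij show ?thesis
      using unicycle_pendant_walk_forward[of i p "j - i"] by (simp add: cycle_dist_def)
  next
    case False
    have "(j + (p - (j - i))) mod p = i" using ij by (simp add: add.commute)
    with ij False show ?thesis
      using relpowp_sym[OF sym unicycle_pendant_walk_forward[of j p "p - (j - i)"]]
      by (simp add: cycle_dist_def)
  qed
  from this[of i j] this[of j i] i j show ?thesis
    using relpowp_sym[OF sym] by (cases "i \<le> j") (auto simp: cycle_dist_commute)
qed

lemma unicycle_pendant_walk_dist:
  assumes i: "i \<le> p" and j: "j \<le> p" and p: "p > 0"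
  shows "(unicycle_pendant_adj p ^^ unicycle_pendant_dist p i j) i j"
proof -
  have to_pendant: "(unicycle_pendant_adj p ^^ Suc (cycle_dist p i 0)) i p" if "i < p" for i
    using unicycle_pendant_walk_cycle_dist[OF that p]
    by (rule relpowp_Suc_I) (simp add: unicycle_pendant_adj_def)
  have from_pendant: "(unicycle_pendant_adj p ^^ Suc (cycle_dist p 0 j)) p j" if "j < p" for j
    using unicycle_pendant_walk_cycle_dist[OF p that]
    by (intro relpowp_Suc_I2[of _ _ 0]) (simp_all add: unicycle_pendant_adj_def)
  show ?thesis
    using i j unicycle_pendant_walk_cycle_dist[of i p j] to_pendant[of i] from_pendant[of j]
    unfolding unicycle_pendant_dist_def by (auto simp: le_less)
qed

lemma graph_dist_unicycle_pendant:
  assumes "i \<le> p" and "j \<le> p" and "p > 0"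
  shows "graph_dist (unicycle_pendant_adj p) i j = unicycle_pendant_dist p i j"
  unfolding graph_dist_def
  by (rule Least_equality)
     (use unicycle_pendant_walk_dist[OF assms] unicycle_pendant_dist_le_walk assms in auto)

section \<open>Second differences along the cycle\<close>

definition circ_dist :: "int \<Rightarrow> int \<Rightarrow> int" where
  "circ_dist p t = min (t mod p) (p - t mod p)"

lemma circ_dist_mod_cong: "a mod p = b mod p \<Longrightarrow> circ_dist p a = circ_dist p b"
  unfolding circ_dist_def by simp

lemma cycle_dist_eq_circ_dist:
  assumes "i < p" and "j < p"
  shows "int (cycle_dist p i j) = circ_dist (int p) (int j - int i)"
proof (cases "i \<le> j")
  case True
  hence "(int j - int i) mod int p = int j - int i" using assms by (simp add: mod_pos_pos_trivial)
  thus ?thesis unfolding cycle_dist_def circ_dist_def using True assms by auto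
next
  case False
  have "(int j - int i) mod int p = (int j - int i + int p) mod int p" by simp
  also have "\<dots> = int p - (int i - int j)" using False assms by (subst mod_pos_pos_trivial) auto
  finally show ?thesis unfolding cycle_dist_def circ_dist_def using False assms by auto
qed

lemma circ_dist_cyc_succ:
  "circ_dist (int p) (int (cyc_succ p j) - int i) = circ_dist (int p) (int j - int i + 1)"
proof (rule circ_dist_mod_cong, cases "Suc j = p")
  case True
  hence "int j - int i + 1 = (int (cyc_succ p j) - int i) + int p" unfolding cyc_succ_def by simp
  thus "(int (cyc_succ p j) - int i) mod int p = (int j - int i + 1) mod int p" by (metis mod_add_self2)
qed (simp add: cyc_succ_def algebra_simps)

lemma circ_dist_cyc_pred:
  assumes "j < p"
  shows "circ_dist (int p) (int (cyc_pred p j) - int i) = circ_dist (int p) (int j - int i - 1)"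
proof (rule circ_dist_mod_cong, cases "j = 0")
  case True
  hence "int (cyc_pred p j) - int i = (int j - int i - 1) + int p"
    unfolding cyc_pred_def using assms by (simp add: of_nat_diff)
  thus "(int (cyc_pred p j) - int i) mod int p = (int j - int i - 1) mod int p" by (metis mod_add_self2)
qed (simp add: cyc_pred_def of_nat_diff algebra_simps)

lemma circ_dist_neighbours:
  fixes m t :: int
  assumes p: "p = 2 * m" and m: "m > 0"
  defines "r \<equiv> t mod p"
  shows "r = 0 \<Longrightarrow> (circ_dist p (t - 1), circ_dist p t, circ_dist p (t + 1)) = (1, 0, 1)"
    and "0 < r \<Longrightarrow> r < m \<Longrightarrow> (circ_dist p (t - 1), circ_dist p t, circ_dist p (t + 1)) = (r - 1, r, r + 1)"
    and "r = m \<Longrightarrow> (circ_dist p (t - 1), circ_dist p t, circ_dist p (t + 1)) = (m - 1, m, m - 1)"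
    and "m < r \<Longrightarrow> (circ_dist p (t - 1), circ_dist p t, circ_dist p (t + 1)) = (p - r + 1, p - r, p - r - 1)"
proof -
  have r: "0 \<le> r" "r < p" unfolding r_def using p m by auto
  have "(t + 1) mod p = (r + 1) mod p" unfolding r_def by (simp add: mod_add_left_eq)
  hence up: "(t + 1) mod p = (if r + 1 = p then 0 else r + 1)" using r by (auto simp: mod_pos_pos_trivial)
  have "(t - 1) mod p = (r - 1) mod p" unfolding r_def by (simp add: mod_diff_left_eq)
  hence down: "(t - 1) mod p = (if r = 0 then p - 1 else r - 1)" using r by (auto simp: mod_pos_pos_trivial zmod_minus1)
  note vals = circ_dist_def up down r_def[symmetric]
  show "r = 0 \<Longrightarrow> (circ_dist p (t - 1), circ_dist p t, circ_dist p (t + 1)) = (1, 0, 1)"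
    and "0 < r \<Longrightarrow> r < m \<Longrightarrow> (circ_dist p (t - 1), circ_dist p t, circ_dist p (t + 1)) = (r - 1, r, r + 1)"
    and "r = m \<Longrightarrow> (circ_dist p (t - 1), circ_dist p t, circ_dist p (t + 1)) = (m - 1, m, m - 1)"
    and "m < r \<Longrightarrow> (circ_dist p (t - 1), circ_dist p t, circ_dist p (t + 1)) = (p - r + 1, p - r, p - r - 1)"
    unfolding vals using r p m by auto
qed

lemma circ_dist_second_diff:
  fixes m t :: int
  assumes p: "p = 2 * m" and m: "m > 0"
  shows "circ_dist p (t - 1) - 2 * circ_dist p t + circ_dist p (t + 1)
    = (if t mod p = 0 then 2 else if t mod p = m then - 2 else 0)"
proof -
  have "0 \<le> t mod p" "t mod p < p" using p m by auto
  then consider "t mod p = 0" | "0 < t mod p" "t mod p < m" | "t mod p = m" | "m < t mod p" by linarith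
  thus ?thesis by cases (use circ_dist_neighbours[OF p m, of t] m in auto)
qed

lemma circ_dist_sq_second_diff:
  fixes m t :: int
  assumes p: "p = 2 * m" and m: "m > 0"
  shows "(circ_dist p (t - 1))\<^sup>2 - 2 * (circ_dist p t)\<^sup>2 + (circ_dist p (t + 1))\<^sup>2
    = (if t mod p = m then 2 - 4 * m else 2)"
proof -
  have "0 \<le> t mod p" "t mod p < p" using p m by auto
  then consider (zero) "t mod p = 0" | (up) "0 < t mod p" "t mod p < m" | (antipode) "t mod p = m"
    | (down) "m < t mod p" by linarith
  thus ?thesis
  proof cases
    case zero
    then have e: "circ_dist p (t - 1) = 1" "circ_dist p t = 0" "circ_dist p (t + 1) = 1"
      using circ_dist_neighbours(1)[OF p m, of t] by simp_all
    show ?thesis unfolding e using zero m by simp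
  next
    case up
    then have e: "circ_dist p (t - 1) = t mod p - 1" "circ_dist p t = t mod p"
      "circ_dist p (t + 1) = t mod p + 1" using circ_dist_neighbours(2)[OF p m, of t] by simp_all
    show ?thesis unfolding e using up by (simp add: power2_eq_square algebra_simps)
  next
    case antipode
    then have e: "circ_dist p (t - 1) = m - 1" "circ_dist p t = m" "circ_dist p (t + 1) = m - 1"
      using circ_dist_neighbours(3)[OF p m, of t] by simp_all
    show ?thesis unfolding e using antipode by (simp add: power2_eq_square algebra_simps)
  next
    case down
    then have e: "circ_dist p (t - 1) = p - t mod p + 1" "circ_dist p t = p - t mod p"
      "circ_dist p (t + 1) = p - t mod p - 1" using circ_dist_neighbours(4)[OF p m, of t] by simp_all
    show ?thesis unfolding e using down by (simp add: power2_eq_square algebra_simps)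
  qed
qed

definition cycle_laplacian :: "nat \<Rightarrow> (nat \<Rightarrow> real) \<Rightarrow> nat \<Rightarrow> real" where
  "cycle_laplacian p f j = f (cyc_pred p j) - 2 * f j + f (cyc_succ p j)"

lemma sum_cyc_succ_reindex: "(\<Sum>j<p. f (cyc_succ p j)) = (\<Sum>j<p. f j)"
  by (rule sum.reindex_bij_witness[of _ "cyc_pred p" "cyc_succ p"]) (auto simp: cyc_succ_less cyc_pred_less)

lemma sum_cyc_pred_reindex: "(\<Sum>j<p. f (cyc_pred p j)) = (\<Sum>j<p. f j)"
  by (rule sum.reindex_bij_witness[of _ "cyc_succ p" "cyc_pred p"]) (auto simp: cyc_succ_less cyc_pred_less)

lemma sum_mult_cycle_laplacian:
  "(\<Sum>j<p. g j * cycle_laplacian p f j) = (\<Sum>j<p. f j * cycle_laplacian p g j)"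
proof -
  have pred: "(\<Sum>j<p. g j * f (cyc_pred p j)) = (\<Sum>j<p. f j * g (cyc_succ p j))"
    using sum_cyc_succ_reindex[of "\<lambda>j. g j * f (cyc_pred p j)" p] by (simp add: mult.commute)
  have succ: "(\<Sum>j<p. g j * f (cyc_succ p j)) = (\<Sum>j<p. f j * g (cyc_pred p j))"
    using sum_cyc_pred_reindex[of "\<lambda>j. g j * f (cyc_succ p j)" p] by (simp add: mult.commute)
  show ?thesis
    unfolding cycle_laplacian_def ring_distribs sum.distrib sum_subtractf pred succ
    by (simp add: algebra_simps sum.distrib)
qed

lemma sum_cycle_laplacian: "(\<Sum>j<p. cycle_laplacian p f j) = 0"
  using sum_mult_cycle_laplacian[of "\<lambda>_. 1" p f] by (simp add: cycle_laplacian_def)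

lemma sum_cycle_laplacian_mult_self:
  "(\<Sum>j<p. cycle_laplacian p f j * f j) = - (\<Sum>j<p. (f (cyc_succ p j) - f j)\<^sup>2)"
proof -
  have pred: "(\<Sum>j<p. f (cyc_pred p j) * f j) = (\<Sum>j<p. f j * f (cyc_succ p j))"
    using sum_cyc_succ_reindex[of "\<lambda>j. f (cyc_pred p j) * f j" p] by simp
  have sq: "(\<Sum>j<p. (f (cyc_succ p j))\<^sup>2) = (\<Sum>j<p. (f j)\<^sup>2)"
    using sum_cyc_succ_reindex[of "\<lambda>j. (f j)\<^sup>2" p] .
  show ?thesis
    unfolding cycle_laplacian_def power2_diff ring_distribs sum.distrib sum_subtractf pred sq
    by (simp add: sum_distrib_left power2_eq_square algebra_simps)
qed

lemma cycle_increments_zero_imp_const: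
  fixes f :: "nat \<Rightarrow> real"
  assumes "(\<Sum>j<p. (f (cyc_succ p j) - f j)\<^sup>2) = 0" and "j < p"
  shows "f j = f 0"
proof -
  have step: "f (cyc_succ p k) = f k" if "k < p" for k
    using assms(1) sum_nonneg_eq_0_iff[of "{..<p}" "\<lambda>j. (f (cyc_succ p j) - f j)\<^sup>2"] that by auto
  show ?thesis using assms(2)
  proof (induction j)
    case (Suc j)
    thus ?case using step[of j] by (simp add: cyc_succ_def)
  qed simp
qed

lemma cycle_laplacian_cong:
  "i < p \<Longrightarrow> (\<And>t. t < p \<Longrightarrow> f t = g t) \<Longrightarrow> cycle_laplacian p f i = cycle_laplacian p g i"
  unfolding cycle_laplacian_def by (simp add: cyc_succ_less cyc_pred_less)

lemma cycle_laplacian_sum: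
  "cycle_laplacian p (\<lambda>t. \<Sum>j\<in>J. c j * f j t) i = (\<Sum>j\<in>J. c j * cycle_laplacian p (f j) i)"
  unfolding cycle_laplacian_def by (simp add: sum.distrib sum_subtractf sum_distrib_left algebra_simps)

definition sq_dist :: "nat \<Rightarrow> nat \<Rightarrow> nat \<Rightarrow> real" where
  "sq_dist p i j = (real (unicycle_pendant_dist p i j))\<^sup>2"

definition antipode :: "nat \<Rightarrow> nat \<Rightarrow> nat" where
  "antipode m i = (if i < m then i + m else i - m)"

lemma antipode_iff:
  assumes p: "p = 2 * m" and i: "i < p" and j: "j < p"
  shows "(int j - int i) mod int p = int m \<longleftrightarrow> j = antipode m i"
proof (cases "i \<le> j")
  case True
  hence "(int j - int i) mod int p = int j - int i" using j by (simp add: mod_pos_pos_trivial)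
  thus ?thesis using True i j p unfolding antipode_def by auto
next
  case False
  have "(int j - int i) mod int p = (int j - int i + int p) mod int p" by simp
  also have "\<dots> = int j - int i + int p" using False i by (intro mod_pos_pos_trivial) auto
  finally show ?thesis using False i j p unfolding antipode_def by auto
qed

lemma real_cycle_dist_circ:
  assumes "i < p" and "j < p"
  shows "real (cycle_dist p i j) = of_int (circ_dist (int p) (int j - int i))"
  using cycle_dist_eq_circ_dist[OF assms] by (metis of_int_of_nat_eq)

lemma cycle_laplacian_sq_dist_cycle_row:
  assumes p: "p = 2 * m" "m > 0" and i: "i < p" and j: "j < p"
  shows "cycle_laplacian p (sq_dist p i) j = (if j = antipode m i then 2 - 4 * real m else 2)"
proof -
  have d: "real (unicycle_pendant_dist p i k) = of_int (circ_dist (int p) (int k - int i))" if "k < p" for k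
    using real_cycle_dist_circ[OF i that] i that by (simp add: unicycle_pendant_dist_def)
  have "cycle_laplacian p (sq_dist p i) j = of_int ((circ_dist (int p) (int j - int i - 1))\<^sup>2
      - 2 * (circ_dist (int p) (int j - int i))\<^sup>2 + (circ_dist (int p) (int j - int i + 1))\<^sup>2)"
    unfolding cycle_laplacian_def sq_dist_def d[OF cyc_pred_less[OF j]] d[OF j] d[OF cyc_succ_less[OF j]]
      circ_dist_cyc_pred[OF j] circ_dist_cyc_succ by simp
  also have "\<dots> = (if (int j - int i) mod int p = int m then 2 - 4 * real m else 2)"
    using circ_dist_sq_second_diff[of "int p" "int m" "int j - int i"] p by simp
  finally show ?thesis unfolding antipode_iff[OF p(1) i j] .
qed

lemma cycle_laplacian_sq_dist_pendant_row:
  assumes p: "p = 2 * m" "m > 0" and j: "j < p"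
  shows "cycle_laplacian p (sq_dist p p) j
    = 2 + (if j = 0 then 4 else 0) - (if j = m then 4 + 4 * real m else 0)"
proof -
  have d: "real (unicycle_pendant_dist p p k) = 1 + of_int (circ_dist (int p) (int k))" if "k < p" for k
    using real_cycle_dist_circ[of 0 p k] that by (simp add: unicycle_pendant_dist_def)
  define c :: "int \<Rightarrow> real" where "c t = of_int (circ_dist (int p) t)" for t
  have "cycle_laplacian p (sq_dist p p) j
      = ((c (int j - 1))\<^sup>2 - 2 * (c (int j))\<^sup>2 + (c (int j + 1))\<^sup>2) + 2 * (c (int j - 1) - 2 * c (int j) + c (int j + 1))"
    unfolding cycle_laplacian_def sq_dist_def d[OF j] d[OF cyc_pred_less[OF j]] d[OF cyc_succ_less[OF j]]
    using circ_dist_cyc_pred[OF j, of 0] circ_dist_cyc_succ[of p j 0]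
    by (simp add: c_def power2_eq_square algebra_simps)
  also have "\<dots> = 2 + (if j = 0 then 4 else 0) - (if j = m then 4 + 4 * real m else 0)"
  proof -
    have jm: "int j mod int p = int j" using j by simp
    have "(c (int j - 1))\<^sup>2 - 2 * (c (int j))\<^sup>2 + (c (int j + 1))\<^sup>2 = (if j = m then 2 - 4 * real m else 2)"
      using arg_cong[where f = real_of_int, OF circ_dist_sq_second_diff[of "int p" "int m" "int j"]] p jm
      unfolding c_def by simp
    moreover have "c (int j - 1) - 2 * c (int j) + c (int j + 1) = (if j = 0 then 2 else if j = m then - 2 else 0)"
      using arg_cong[where f = real_of_int, OF circ_dist_second_diff[of "int p" "int m" "int j"]] p jm
      unfolding c_def by simp
    ultimately show ?thesis using p by auto
  qed
  finally show ?thesis .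
qed

lemma sq_dist_commute: "i \<le> p \<Longrightarrow> j \<le> p \<Longrightarrow> sq_dist p i j = sq_dist p j i"
  unfolding sq_dist_def by (simp add: unicycle_pendant_dist_commute)

lemma sq_dist_pendant_values:
  assumes "p > 0"
  shows "sq_dist p 0 0 = 0" "sq_dist p p p = 0" "sq_dist p 0 p = 1" "sq_dist p p 0 = 1"
  using assms unfolding sq_dist_def unicycle_pendant_dist_def cycle_dist_def by auto

lemma sum_antipode_reindex:
  assumes "p = 2 * m"
  shows "(\<Sum>j<p. f (antipode m j)) = (\<Sum>j<p. f j)"
  by (rule sum.reindex_bij_witness[of _ "antipode m" "antipode m"]) (use assms in \<open>auto simp: antipode_def\<close>)

lemma sum_sq_dist_cycle_laplacian_cycle_row:
  assumes p: "p = 2 * m" "m > 0" and i: "i < p"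
  shows "(\<Sum>j<p. sq_dist p i j * cycle_laplacian p \<alpha> j) = 2 * (\<Sum>j<p. \<alpha> j) - 4 * real m * \<alpha> (antipode m i)"
proof -
  have "antipode m i < p" using i p unfolding antipode_def by auto
  have "(\<Sum>j<p. sq_dist p i j * cycle_laplacian p \<alpha> j)
      = (\<Sum>j<p. 2 * \<alpha> j - (if j = antipode m i then 4 * real m * \<alpha> j else 0))"
    unfolding sum_mult_cycle_laplacian
    by (rule sum.cong) (auto simp: cycle_laplacian_sq_dist_cycle_row[OF p i] algebra_simps)
  also have "\<dots> = 2 * (\<Sum>j<p. \<alpha> j) - 4 * real m * \<alpha> (antipode m i)"
    using \<open>antipode m i < p\<close> by (simp add: sum_subtractf sum_distrib_left)
  finally show ?thesis .
qed

lemma sum_sq_dist_cycle_laplacian_pendant_row: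
  assumes p: "p = 2 * m" "m > 0"
  shows "(\<Sum>j<p. sq_dist p p j * cycle_laplacian p \<alpha> j)
    = 2 * (\<Sum>j<p. \<alpha> j) + 4 * \<alpha> 0 - (4 + 4 * real m) * \<alpha> m"
proof -
  have "(\<Sum>j<p. sq_dist p p j * cycle_laplacian p \<alpha> j) = (\<Sum>j<p. 2 * \<alpha> j
      + (if j = 0 then 4 * \<alpha> j else 0) - (if j = m then (4 + 4 * real m) * \<alpha> j else 0))"
    unfolding sum_mult_cycle_laplacian
    by (rule sum.cong) (auto simp: cycle_laplacian_sq_dist_pendant_row[OF p] algebra_simps)
  also have "\<dots> = 2 * (\<Sum>j<p. \<alpha> j) + 4 * \<alpha> 0 - (4 + 4 * real m) * \<alpha> m"
    using p by (simp add: sum_subtractf sum.distrib sum_distrib_left)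
  finally show ?thesis .
qed

lemma sum_sq_dist_cycle_laplacian_antisymmetric:
  assumes p: "p = 2 * m" "m > 0" and anti: "\<And>i. i < p \<Longrightarrow> \<alpha> (antipode m i) = - \<alpha> i"
  shows "i < p \<Longrightarrow> (\<Sum>j<p. sq_dist p i j * cycle_laplacian p \<alpha> j) = 4 * real m * \<alpha> i"
    and "(\<Sum>j<p. sq_dist p p j * cycle_laplacian p \<alpha> j) = (8 + 4 * real m) * \<alpha> 0"
proof -
  have "(\<Sum>t<p. \<alpha> t) = (\<Sum>t<p. - \<alpha> t)"
    using sum_antipode_reindex[OF p(1), of \<alpha>] anti by simp
  hence sum0: "(\<Sum>t<p. \<alpha> t) = 0" by (simp add: sum_negf)
  show "i < p \<Longrightarrow> (\<Sum>j<p. sq_dist p i j * cycle_laplacian p \<alpha> j) = 4 * real m * \<alpha> i"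
    using sum_sq_dist_cycle_laplacian_cycle_row[OF p] sum0 anti by simp
  have "\<alpha> m = - \<alpha> 0" using anti[of 0] p by (simp add: antipode_def)
  thus "(\<Sum>j<p. sq_dist p p j * cycle_laplacian p \<alpha> j) = (8 + 4 * real m) * \<alpha> 0"
    using sum_sq_dist_cycle_laplacian_pendant_row[OF p, of \<alpha>] sum0 by (simp add: algebra_simps)
qed

lemma sum_cycle_laplacian_mult_sq_dist_row_sums:
  assumes p: "p = 2 * m" "m > 0" and sym: "\<And>i. i < p \<Longrightarrow> \<alpha> (antipode m i) = \<alpha> i"
  shows "(\<Sum>i<p. cycle_laplacian p \<alpha> i * (\<Sum>j<p. sq_dist p i j)) = 0"
proof -
  define s where "s = (\<Sum>t<p. \<alpha> t)"
  have "(\<Sum>i<p. cycle_laplacian p \<alpha> i * (\<Sum>j<p. sq_dist p i j))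
      = (\<Sum>k<p. \<Sum>j<p. sq_dist p k j * cycle_laplacian p \<alpha> j)"
    unfolding sum_distrib_left
    by (subst sum.swap) (auto simp: sq_dist_commute mult.commute intro!: sum.cong)
  also have "\<dots> = (\<Sum>k<p. 2 * s - 4 * real m * \<alpha> k)"
    using sum_sq_dist_cycle_laplacian_cycle_row[OF p] sym unfolding s_def by simp
  also have "\<dots> = real p * (2 * s) - 4 * real m * s"
    by (simp add: sum_subtractf s_def[symmetric] sum_distrib_left[symmetric])
  finally show ?thesis using p by simp
qed

section \<open>The quadratic form on two test subspaces\<close>

lemma quadratic_form_sq_dist_antisymmetric:
  fixes \<alpha> :: "nat \<Rightarrow> real" and c x :: real
  assumes p: "p = 2 * m" "m > 0" and anti: "\<And>i. i < p \<Longrightarrow> \<alpha> (antipode m i) = - \<alpha> i"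
  defines "X \<equiv> \<lambda>i. if i < p then cycle_laplacian p \<alpha> i + (if i = 0 then c else 0) else x"
  shows "(\<Sum>i<p + 1. X i * (\<Sum>j<p + 1. sq_dist p i j * X j))
    = - 4 * real m * (\<Sum>j<p. (\<alpha> (cyc_succ p j) - \<alpha> j)\<^sup>2)
      + 8 * \<alpha> 0 * (real m * c + (real m + 2) * x) + 2 * c * x"
proof -
  have p0: "0 < p" using p by simp
  note F = sq_dist_pendant_values[OF p0]
  have row: "(\<Sum>j<p. sq_dist p i j * cycle_laplacian p \<alpha> j) = 4 * real m * \<alpha> i" if "i < p" for i
    using p anti that by (rule sum_sq_dist_cycle_laplacian_antisymmetric(1))
  have row_p: "(\<Sum>j<p. sq_dist p p j * cycle_laplacian p \<alpha> j) = (8 + 4 * real m) * \<alpha> 0"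
    using p anti by (rule sum_sq_dist_cycle_laplacian_antisymmetric(2))
  have col: "(\<Sum>i<p. cycle_laplacian p \<alpha> i * sq_dist p i k) = (\<Sum>j<p. sq_dist p k j * cycle_laplacian p \<alpha> j)"
    if "k \<le> p" for k
    by (rule sum.cong) (use that in \<open>auto simp: sq_dist_commute[of _ p k] mult.commute\<close>)
  have delta: "(\<Sum>i<p. (if i = 0 then c else 0) * f i) = c * f 0" for f
  proof -
    have "(\<Sum>i<p. (if i = 0 then c else 0) * f i) = (\<Sum>i<p. if i = 0 then c * f i else 0)"
      by (rule sum.cong) auto
    thus ?thesis using p0 by simp
  qed
  define Y where "Y i = (\<Sum>j<p + 1. sq_dist p i j * X j)" for i
  have Y: "Y i = (\<Sum>j<p. sq_dist p i j * cycle_laplacian p \<alpha> j) + c * sq_dist p i 0 + x * sq_dist p i p" for i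
    unfolding Y_def X_def using delta[of "sq_dist p i"] by (simp add: ring_distribs sum.distrib mult.commute)
  have "(\<Sum>i<p + 1. X i * Y i) = (\<Sum>i<p. cycle_laplacian p \<alpha> i * Y i) + c * Y 0 + x * Y p"
    unfolding X_def using delta[of Y] by (simp add: ring_distribs sum.distrib)
  also have "(\<Sum>i<p. cycle_laplacian p \<alpha> i * Y i)
      = 4 * real m * (\<Sum>i<p. cycle_laplacian p \<alpha> i * \<alpha> i)
        + c * (\<Sum>i<p. cycle_laplacian p \<alpha> i * sq_dist p i 0) + x * (\<Sum>i<p. cycle_laplacian p \<alpha> i * sq_dist p i p)"
  proof -
    have "(\<Sum>i<p. cycle_laplacian p \<alpha> i * Y i) = (\<Sum>i<p. 4 * real m * (cycle_laplacian p \<alpha> i * \<alpha> i)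
        + c * (cycle_laplacian p \<alpha> i * sq_dist p i 0) + x * (cycle_laplacian p \<alpha> i * sq_dist p i p))"
    proof (rule sum.cong)
      fix i assume "i \<in> {..<p}"
      hence i: "i < p" by simp
      show "cycle_laplacian p \<alpha> i * Y i = 4 * real m * (cycle_laplacian p \<alpha> i * \<alpha> i)
        + c * (cycle_laplacian p \<alpha> i * sq_dist p i 0) + x * (cycle_laplacian p \<alpha> i * sq_dist p i p)"
        unfolding Y row[OF i] by (simp add: algebra_simps)
    qed simp
    thus ?thesis by (simp add: sum.distrib sum_distrib_left)
  qed
  finally show ?thesis
    unfolding Y_def[symmetric] Y sum_cycle_laplacian_mult_self col[OF le0] col[OF order_refl] row[OF p0] row_p F
    by (simp add: algebra_simps)
qed

lemma quadratic_form_sq_dist_symmetric: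
  fixes \<alpha> :: "nat \<Rightarrow> real" and b :: real
  assumes p: "p = 2 * m" "m > 0" and sym: "\<And>i. i < p \<Longrightarrow> \<alpha> (antipode m i) = \<alpha> i"
  defines "X \<equiv> \<lambda>i. if i < p then cycle_laplacian p \<alpha> i + b else 0"
  shows "(\<Sum>i<p + 1. X i * (\<Sum>j<p + 1. sq_dist p i j * X j))
    = 4 * real m * (\<Sum>j<p. (\<alpha> (cyc_succ p j) - \<alpha> j)\<^sup>2) + b\<^sup>2 * (\<Sum>i<p. \<Sum>j<p. sq_dist p i j)"
proof -
  define s where "s = (\<Sum>t<p. \<alpha> t)"
  define R where "R i = (\<Sum>j<p. sq_dist p i j)" for i
  have row: "(\<Sum>j<p. sq_dist p i j * cycle_laplacian p \<alpha> j) = 2 * s - 4 * real m * \<alpha> i" if "i < p" for i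
    using sum_sq_dist_cycle_laplacian_cycle_row[OF p that] sym[OF that] unfolding s_def by simp
  have Y: "(\<Sum>j<p + 1. sq_dist p i j * X j) = 2 * s - 4 * real m * \<alpha> i + b * R i" if "i < p" for i
    unfolding X_def R_def using row[OF that]
    by (simp add: ring_distribs sum.distrib sum_distrib_left mult.commute)
  have LR: "(\<Sum>i<p. cycle_laplacian p \<alpha> i * R i) = 0"
    unfolding R_def using p sym by (rule sum_cycle_laplacian_mult_sq_dist_row_sums)
  define T where "T i = 2 * s - 4 * real m * \<alpha> i + b * R i" for i
  have "(\<Sum>i<p + 1. X i * (\<Sum>j<p + 1. sq_dist p i j * X j)) = (\<Sum>i<p. (cycle_laplacian p \<alpha> i + b) * T i)"
  proof -
    have "(\<Sum>i<p + 1. X i * (\<Sum>j<p + 1. sq_dist p i j * X j)) = (\<Sum>i<p. X i * (\<Sum>j<p + 1. sq_dist p i j * X j))"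
      by (simp add: X_def)
    also have "\<dots> = (\<Sum>i<p. (cycle_laplacian p \<alpha> i + b) * T i)"
      unfolding T_def by (rule sum.cong) (simp_all only: lessThan_iff Y, simp add: X_def)
    finally show ?thesis .
  qed
  also have "\<dots> = (\<Sum>i<p. cycle_laplacian p \<alpha> i * T i) + b * (\<Sum>i<p. T i)"
    by (simp add: ring_distribs sum.distrib sum_distrib_left)
  also have "(\<Sum>i<p. T i) = b * (\<Sum>i<p. R i)"
  proof -
    have "(\<Sum>i<p. 2 * s - 4 * real m * \<alpha> i) = real p * (2 * s) - 4 * real m * s"
      by (simp add: sum_subtractf s_def[symmetric] sum_distrib_left[symmetric])
    thus ?thesis unfolding T_def sum.distrib using p by (simp add: sum_distrib_left)
  qed
  also have "(\<Sum>i<p. cycle_laplacian p \<alpha> i * T i) = 2 * s * (\<Sum>i<p. cycle_laplacian p \<alpha> i)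
      - 4 * real m * (\<Sum>i<p. cycle_laplacian p \<alpha> i * \<alpha> i) + b * (\<Sum>i<p. cycle_laplacian p \<alpha> i * R i)"
  proof -
    have "(\<Sum>i<p. cycle_laplacian p \<alpha> i * T i) = (\<Sum>i<p. 2 * s * cycle_laplacian p \<alpha> i
        - 4 * real m * (cycle_laplacian p \<alpha> i * \<alpha> i) + b * (cycle_laplacian p \<alpha> i * R i))"
      unfolding T_def by (rule sum.cong) (simp_all add: algebra_simps)
    thus ?thesis by (simp add: sum.distrib sum_subtractf sum_distrib_left)
  qed
  finally show ?thesis
    unfolding sum_cycle_laplacian sum_cycle_laplacian_mult_self LR unfolding R_def
    by (simp add: power2_eq_square)
qed

definition antisym_ext :: "nat \<Rightarrow> (nat \<Rightarrow> real) \<Rightarrow> nat \<Rightarrow> real" where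
  "antisym_ext m g t = (if t < m then g t else - g (t - m))"

definition sym_ext :: "nat \<Rightarrow> (nat \<Rightarrow> real) \<Rightarrow> nat \<Rightarrow> real" where
  "sym_ext m g t = (if t < m then g t else g (t - m))"

lemma antisym_ext_antipode: "i < 2 * m \<Longrightarrow> antisym_ext m g (antipode m i) = - antisym_ext m g i"
  unfolding antisym_ext_def antipode_def by auto

lemma sym_ext_antipode: "i < 2 * m \<Longrightarrow> sym_ext m g (antipode m i) = sym_ext m g i"
  unfolding sym_ext_def antipode_def by auto

lemma sum_antisym_ext_indicator:
  assumes "t < 2 * m"
  shows "(\<Sum>j<m. g j * antisym_ext m (\<lambda>k. if k = j then 1 else 0) t) = antisym_ext m g t"
proof -
  have "(\<Sum>j<m. g j * antisym_ext m (\<lambda>k. if k = j then 1 else 0) t)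
      = (\<Sum>j<m. if j = (if t < m then t else t - m) then antisym_ext m g t else 0)"
    by (rule sum.cong) (auto simp: antisym_ext_def)
  thus ?thesis using assms by auto
qed

lemma sum_sym_ext_indicator:
  assumes "t < 2 * m"
  shows "(\<Sum>j<m. g j * sym_ext m (\<lambda>k. if k = j then 1 else 0) t) = sym_ext m g t"
proof -
  have "(\<Sum>j<m. g j * sym_ext m (\<lambda>k. if k = j then 1 else 0) t)
      = (\<Sum>j<m. if j = (if t < m then t else t - m) then sym_ext m g t else 0)"
    by (rule sum.cong) (auto simp: sym_ext_def)
  thus ?thesis using assms by auto
qed

lemma antisym_ext_increments_zero:
  assumes m: "m > 0" and E: "(\<Sum>j<2 * m. (antisym_ext m g (cyc_succ (2 * m) j) - antisym_ext m g j)\<^sup>2) = 0"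
    and j: "j < m"
  shows "g j = 0"
proof -
  note const = cycle_increments_zero_imp_const[OF E]
  have "g 0 = - g 0" using const[of m] m by (simp add: antisym_ext_def)
  thus ?thesis using const[of j] j m by (simp add: antisym_ext_def)
qed

lemma sym_ext_increments_zero:
  assumes E: "(\<Sum>j<2 * m. (sym_ext m g (cyc_succ (2 * m) j) - sym_ext m g j)\<^sup>2) = 0"
    and g0: "g 0 = 0" and j: "j < m"
  shows "g j = 0"
  using cycle_increments_zero_imp_const[OF E, of j] g0 j by (simp add: sym_ext_def)

lemma index_mult_mat_vec_mat:
  "i < n \<Longrightarrow> \<gamma> \<in> carrier_vec k \<Longrightarrow> (mat n k f *\<^sub>v \<gamma>) $ i = (\<Sum>j<k. f (i, j) * \<gamma> $ j)"
  by (simp add: scalar_prod_def row_def atLeast0LessThan)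

lemma quadratic_form_mat:
  assumes "x \<in> carrier_vec n" and "\<And>i. i < n \<Longrightarrow> x $ i = X i"
  shows "x \<bullet> (mat n n (\<lambda>(i, j). F i j) *\<^sub>v x) = (\<Sum>i<n. X i * (\<Sum>j<n. F i j * X j))"
proof -
  have "x \<bullet> (mat n n (\<lambda>(i, j). F i j) *\<^sub>v x) = (\<Sum>i<n. x $ i * (\<Sum>j<n. F i j * x $ j))"
    using assms(1) by (simp add: scalar_prod_def mult_mat_vec_def row_def atLeast0LessThan)
  also have "\<dots> = (\<Sum>i<n. X i * (\<Sum>j<n. F i j * X j))"
    by (intro sum.cong refl arg_cong2[where f = "(*)"]) (simp_all add: assms(2))
  finally show ?thesis .
qed

text \<open>The last
  column puts weight \<open>m\<close> on the pendant vertex and \<open>-(m + 2)\<close> on vertex \<open>0\<close>: this choice of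
  \<open>x\<close> and \<open>c\<close> kills the cross term \<open>8 * \<alpha> 0 * (m * c + (m + 2) * x)\<close> of
  \<open>quadratic_form_sq_dist_antisymmetric\<close>.\<close>

definition neg_test_mat :: "nat \<Rightarrow> real mat" where
  "neg_test_mat m = mat (2 * m + 1) (m + 1) (\<lambda>(i, j).
    if j < m then (if i < 2 * m then cycle_laplacian (2 * m) (antisym_ext m (\<lambda>k. if k = j then 1 else 0)) i else 0)
    else if i = 2 * m then real m else if i = 0 then - (real m + 2) else 0)"

definition pos_test_mat :: "nat \<Rightarrow> real mat" where
  "pos_test_mat m = mat (2 * m + 1) m (\<lambda>(i, j).
    if i < 2 * m then (if j = 0 then 1 else cycle_laplacian (2 * m) (sym_ext m (\<lambda>k. if k = j then 1 else 0)) i)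
    else 0)"

lemma neg_test_mat_mult_vec:
  assumes \<gamma>: "\<gamma> \<in> carrier_vec (m + 1)" and i: "i < 2 * m + 1"
  shows "(neg_test_mat m *\<^sub>v \<gamma>) $ i = (if i < 2 * m
    then cycle_laplacian (2 * m) (antisym_ext m (($) \<gamma>)) i + (if i = 0 then - (real m + 2) * \<gamma> $ m else 0)
    else real m * \<gamma> $ m)"
proof (cases "i < 2 * m")
  case True
  have "(\<Sum>j<m. cycle_laplacian (2 * m) (antisym_ext m (\<lambda>k. if k = j then 1 else 0)) i * \<gamma> $ j)
      = cycle_laplacian (2 * m) (\<lambda>t. \<Sum>j<m. \<gamma> $ j * antisym_ext m (\<lambda>k. if k = j then 1 else 0) t) i"
    unfolding cycle_laplacian_sum by (simp add: mult.commute)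
  also have "\<dots> = cycle_laplacian (2 * m) (antisym_ext m (($) \<gamma>)) i"
    by (rule cycle_laplacian_cong[OF True]) (rule sum_antisym_ext_indicator)
  finally show ?thesis
    using True unfolding neg_test_mat_def index_mult_mat_vec_mat[OF i \<gamma>] by simp
next
  case False
  with i have "i = 2 * m" by simp
  thus ?thesis unfolding neg_test_mat_def index_mult_mat_vec_mat[OF i \<gamma>] by simp
qed

lemma pos_test_mat_mult_vec:
  assumes \<gamma>: "\<gamma> \<in> carrier_vec m" and m: "m > 0" and i: "i < 2 * m + 1"
  shows "(pos_test_mat m *\<^sub>v \<gamma>) $ i = (if i < 2 * m
    then cycle_laplacian (2 * m) (sym_ext m (\<lambda>j. if j = 0 then 0 else \<gamma> $ j)) i + \<gamma> $ 0 else 0)"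
proof (cases "i < 2 * m")
  case True
  define h where "h j = (if j = 0 then 0 else \<gamma> $ j)" for j
  have "(pos_test_mat m *\<^sub>v \<gamma>) $ i = (\<Sum>j<m. (if j = 0 then \<gamma> $ j else 0)
      + h j * cycle_laplacian (2 * m) (sym_ext m (\<lambda>k. if k = j then 1 else 0)) i)"
    unfolding index_mult_mat_vec_mat[OF i \<gamma>] pos_test_mat_def
    by (rule sum.cong) (use True in \<open>auto simp: h_def\<close>)
  also have "\<dots> = \<gamma> $ 0 + cycle_laplacian (2 * m) (\<lambda>t. \<Sum>j<m. h j * sym_ext m (\<lambda>k. if k = j then 1 else 0) t) i"
    unfolding sum.distrib cycle_laplacian_sum using m by simp
  also have "cycle_laplacian (2 * m) (\<lambda>t. \<Sum>j<m. h j * sym_ext m (\<lambda>k. if k = j then 1 else 0) t) i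
      = cycle_laplacian (2 * m) (sym_ext m h) i"
    by (rule cycle_laplacian_cong[OF True]) (rule sum_sym_ext_indicator)
  finally show ?thesis using True unfolding h_def by simp
next
  case False
  thus ?thesis unfolding pos_test_mat_def index_mult_mat_vec_mat[OF i \<gamma>] by simp
qed

lemma neg_test_mat_negative_definite:
  assumes m: "m > 0" and \<gamma>: "\<gamma> \<in> carrier_vec (m + 1)" "\<gamma> \<noteq> 0\<^sub>v (m + 1)"
  defines "x \<equiv> neg_test_mat m *\<^sub>v \<gamma>"
  shows "x \<bullet> (mat (2 * m + 1) (2 * m + 1) (\<lambda>(i, j). sq_dist (2 * m) i j) *\<^sub>v x) < 0"
proof -
  define \<alpha> where "\<alpha> = antisym_ext m (($) \<gamma>)"
  let ?X = "\<lambda>i. if i < 2 * m then cycle_laplacian (2 * m) \<alpha> i + (if i = 0 then - (real m + 2) * \<gamma> $ m else 0)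
    else real m * \<gamma> $ m"
  define E where "E = (\<Sum>j<2 * m. (\<alpha> (cyc_succ (2 * m) j) - \<alpha> j)\<^sup>2)"
  have x: "x \<in> carrier_vec (2 * m + 1)" unfolding x_def neg_test_mat_def carrier_vec_def by simp
  have "x \<bullet> (mat (2 * m + 1) (2 * m + 1) (\<lambda>(i, j). sq_dist (2 * m) i j) *\<^sub>v x)
      = (\<Sum>i<2 * m + 1. ?X i * (\<Sum>j<2 * m + 1. sq_dist (2 * m) i j * ?X j))"
    by (rule quadratic_form_mat[OF x]) (simp add: x_def neg_test_mat_mult_vec[OF \<gamma>(1)] \<alpha>_def)
  also have "\<dots> = - 4 * real m * E - 2 * real m * (real m + 2) * (\<gamma> $ m)\<^sup>2"
  proof -
    have anti: "\<alpha> (antipode m i) = - \<alpha> i" if "i < 2 * m" for i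
      unfolding \<alpha>_def using that by (rule antisym_ext_antipode)
    show ?thesis
      by (subst quadratic_form_sq_dist_antisymmetric[where p = "2 * m" and m = m and \<alpha> = \<alpha>, OF refl m anti])
        (simp_all add: E_def power2_eq_square algebra_simps)
  qed
  also have "\<dots> < 0"
  proof (cases "\<gamma> $ m = 0")
    case True
    have "E \<noteq> 0"
    proof
      assume "E = 0"
      hence "\<gamma> $ j = 0" if "j < m + 1" for j
        using antisym_ext_increments_zero[OF m, of "($) \<gamma>" j] True that
        unfolding E_def \<alpha>_def by (cases "j = m") auto
      thus False using \<gamma> by (auto intro: eq_vecI)
    qed
    moreover have "E \<ge> 0" unfolding E_def by (intro sum_nonneg) simp
    ultimately show ?thesis using True m by simp
  next
    case False
    have "E \<ge> 0" unfolding E_def by (intro sum_nonneg) simp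
    hence "4 * real m * E \<ge> 0" by simp
    moreover have "2 * real m * (real m + 2) * (\<gamma> $ m)\<^sup>2 > 0" using False m by simp
    ultimately show ?thesis by linarith
  qed
  finally show ?thesis .
qed

lemma sum_sq_dist_cycle_pos:
  assumes "p > 1"
  shows "(\<Sum>i<p. \<Sum>j<p. sq_dist p i j) > 0"
proof -
  have "sq_dist p 0 1 = 1" using assms by (simp add: sq_dist_def unicycle_pendant_dist_def cycle_dist_def)
  moreover have "sq_dist p 0 1 \<le> (\<Sum>i<p. \<Sum>j<p. sq_dist p i j)"
    using assms by (intro order_trans[OF member_le_sum[of 1] member_le_sum[of 0]])
      (auto simp: sq_dist_def intro: sum_nonneg)
  ultimately show ?thesis by simp
qed

lemma pos_test_mat_positive_definite:
  assumes m: "m > 0" and \<gamma>: "\<gamma> \<in> carrier_vec m" "\<gamma> \<noteq> 0\<^sub>v m"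
  defines "x \<equiv> pos_test_mat m *\<^sub>v \<gamma>"
  shows "x \<bullet> (mat (2 * m + 1) (2 * m + 1) (\<lambda>(i, j). sq_dist (2 * m) i j) *\<^sub>v x) > 0"
proof -
  define \<alpha> where "\<alpha> = sym_ext m (\<lambda>j. if j = 0 then 0 else \<gamma> $ j)"
  let ?X = "\<lambda>i. if i < 2 * m then cycle_laplacian (2 * m) \<alpha> i + \<gamma> $ 0 else 0"
  define E where "E = (\<Sum>j<2 * m. (\<alpha> (cyc_succ (2 * m) j) - \<alpha> j)\<^sup>2)"
  define S where "S = (\<Sum>i<2 * m. \<Sum>j<2 * m. sq_dist (2 * m) i j)"
  have x: "x \<in> carrier_vec (2 * m + 1)" unfolding x_def pos_test_mat_def carrier_vec_def by simp
  have "x \<bullet> (mat (2 * m + 1) (2 * m + 1) (\<lambda>(i, j). sq_dist (2 * m) i j) *\<^sub>v x)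
      = (\<Sum>i<2 * m + 1. ?X i * (\<Sum>j<2 * m + 1. sq_dist (2 * m) i j * ?X j))"
    by (rule quadratic_form_mat[OF x]) (simp add: x_def pos_test_mat_mult_vec[OF \<gamma>(1) m] \<alpha>_def)
  also have "\<dots> = 4 * real m * E + (\<gamma> $ 0)\<^sup>2 * S"
  proof -
    have sym: "\<alpha> (antipode m i) = \<alpha> i" if "i < 2 * m" for i
      unfolding \<alpha>_def using that by (rule sym_ext_antipode)
    show ?thesis
      by (subst quadratic_form_sq_dist_symmetric[where p = "2 * m" and m = m and \<alpha> = \<alpha>, OF refl m sym])
        (simp_all add: E_def S_def)
  qed
  also have "\<dots> > 0"
  proof -
    have "E \<ge> 0" unfolding E_def by (intro sum_nonneg) simp
    moreover have "S > 0" unfolding S_def using m by (intro sum_sq_dist_cycle_pos) simp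
    moreover have "E > 0" if "\<gamma> $ 0 = 0"
    proof (rule ccontr)
      assume "\<not> E > 0"
      with \<open>E \<ge> 0\<close> have "E = 0" by simp
      hence "\<gamma> $ j = 0" if "j < m" for j
        using sym_ext_increments_zero[of m "\<lambda>j. if j = 0 then 0 else \<gamma> $ j" j] \<open>\<gamma> $ 0 = 0\<close> that
        unfolding E_def \<alpha>_def
        by (cases "j = 0") auto
      thus False using \<gamma> by (auto intro: eq_vecI)
    qed
    ultimately show ?thesis using \<open>E \<ge> 0\<close> m
      by (cases "\<gamma> $ 0 = 0") (auto intro: add_nonneg_pos add_pos_nonneg)
  qed
  finally show ?thesis .
qed

lemma dist_sq_matrix_unicycle_pendant:
  "p > 0 \<Longrightarrow> dist_sq_matrix (p + 1) (unicycle_pendant_adj p) = mat (p + 1) (p + 1) (\<lambda>(i, j). sq_dist p i j)"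
  unfolding dist_sq_matrix_def sq_dist_def
  by (rule eq_matI) (auto simp: graph_dist_unicycle_pendant)

theorem lemma6p3:
  fixes m p :: nat
  assumes "p = 2 * m" and "p \<ge> 4"
  shows "(i_plus (dist_sq_matrix (p + 1) (unicycle_pendant_adj p)),
          i_minus (dist_sq_matrix (p + 1) (unicycle_pendant_adj p)),
          i_zero (dist_sq_matrix (p + 1) (unicycle_pendant_adj p))) = (m, m + 1, 0)"
proof -
  have m: "m > 0" using assms by simp
  define \<Delta> where "\<Delta> = mat (2 * m + 1) (2 * m + 1) (\<lambda>(i, j). sq_dist (2 * m) i j)"
  have "dist_sq_matrix (p + 1) (unicycle_pendant_adj p) = \<Delta>"
    unfolding \<Delta>_def using dist_sq_matrix_unicycle_pendant[of p] assms by simp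
  moreover have "(i_plus \<Delta>, i_minus \<Delta>, i_zero \<Delta>) = (m, m + 1, 0)"
  proof (rule inertia_from_definite_subspaces)
    show "\<Delta> \<in> carrier_mat (2 * m + 1) (2 * m + 1)" unfolding \<Delta>_def by simp
    show "transpose_mat \<Delta> = \<Delta>" unfolding \<Delta>_def by (rule eq_matI) (auto simp: sq_dist_commute)
    show "pos_test_mat m \<in> carrier_mat (2 * m + 1) m" by (simp add: pos_test_mat_def)
    show "neg_test_mat m \<in> carrier_mat (2 * m + 1) (m + 1)" by (simp add: neg_test_mat_def)
  qed (use pos_test_mat_positive_definite[OF m] neg_test_mat_negative_definite[OF m] in \<open>simp_all add: \<Delta>_def\<close>)
  ultimately show ?thesis by simp
qed

end
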